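(* Let $(Q,\star,e)$ be a double Ward quasigroup. Define $x\bullet y=(e\star x)\star y$. Then $(Q,\bullet)$ is a Ward quasigroup, i.e. a quasigroup satisfying $(x\bullet z)\bullet(y\bullet z)=x\bullet y$ for all $x,y,z\in Q$.
   Context: A quasigroup is a magma in which $ax=b$ and $ya=b$ have unique solutions for all $a,b$. A double Ward quasigroup $(Q,\star,e)$ is a quasigroup $(Q,\star)$ with an element $e$ such that $((e\star e)\star(x\star z))\star((e\star y)\star z)=x\star y$ for all $x,y,z\in Q$. *)

theory Defs
  imports Main
begin

definition quasigroup :: "('a \<Rightarrow> 'a \<Rightarrow> 'a) \<Rightarrow> bool" where
  "quasigroup m \<longleftrightarrow> (\<forall>a b. (\<exists>!x. m a x = b) \<and> (\<exists>!y. m y a = b))"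

definition double_ward_quasigroup :: "('a \<Rightarrow> 'a \<Rightarrow> 'a) \<Rightarrow> 'a \<Rightarrow> bool" where
  "double_ward_quasigroup m e \<longleftrightarrow> quasigroup m \<and>
     (\<forall>x y z. m (m (m e e) (m x z)) (m (m e y) z) = m x y)"

definition ward_quasigroup :: "('a \<Rightarrow> 'a \<Rightarrow> 'a) \<Rightarrow> bool" where
  "ward_quasigroup m \<longleftrightarrow> quasigroup m \<and> (\<forall>x y z. m (m x z) (m y z) = m x y)"

end

theory Submission
  imports Defs
begin

text \<open>Putting \<open>x = y = e \<star> e\<close> and \<open>z\<close> with \<open>(e \<star> e) \<star> z = e\<close> into the double Ward identity
  gives \<open>((e \<star> e) \<star> e) \<star> e = (e \<star> e) \<star> e\<close>, so \<open>e \<star> e = e\<close> by cancelling twice. With this the double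
  Ward identity instantiated at \<open>e \<star> x\<close> is literally the Ward identity for \<open>\<bullet>\<close>, and \<open>\<bullet>\<close> is a
  quasigroup because it is \<open>\<star>\<close> with its first argument permuted by the bijection \<open>x \<mapsto> e \<star> x\<close>.\<close>

lemma quasigroup_left_solvable: "quasigroup m \<Longrightarrow> \<exists>x. m a x = b"
  unfolding quasigroup_def by blast

lemma quasigroup_left_cancel:
  assumes "quasigroup m" and "m a x = m a y"
  shows "x = y"
proof -
  have "\<exists>!z. m a z = m a y"
    using assms(1) unfolding quasigroup_def by blast
  then show ?thesis
    using assms(2) by blast
qed

lemma quasigroup_right_cancel:
  assumes "quasigroup m" and "m x a = m y a"
  shows "x = y"
proof -
  have "\<exists>!z. m z a = m y a"
    using assms(1) unfolding quasigroup_def by blast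
  then show ?thesis
    using assms(2) by blast
qed

lemma quasigroup_bij_left_translation:
  assumes "quasigroup m"
  shows "bij (m a)"
proof (rule bijI)
  show "inj (m a)"
    using quasigroup_left_cancel[OF assms] by (rule injI)
  show "surj (m a)"
    using quasigroup_left_solvable[OF assms] unfolding surj_def by metis
qed

lemma quasigroup_precompose_bij:
  assumes "quasigroup m" and "bij f"
  shows "quasigroup (\<lambda>x y. m (f x) y)"
  unfolding quasigroup_def
proof (intro allI conjI)
  fix a b
  show "\<exists>!x. m (f a) x = b"
    using assms(1) unfolding quasigroup_def by blast
  have "\<exists>!t. m t a = b"
    using assms(1) unfolding quasigroup_def by blast
  then obtain t where t: "m t a = b" and t_unique: "\<And>t'. m t' a = b \<Longrightarrow> t' = t"
    by blast
  obtain y where y: "t = f y" and y_unique: "\<And>y'. t = f y' \<Longrightarrow> y' = y"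
    using \<open>bij f\<close> by (rule bij_pointE[where y = t]) blast
  show "\<exists>!y. m (f y) a = b"
  proof (rule ex1I)
    show "m (f y) a = b"
      using t y by simp
    show "y' = y" if "m (f y') a = b" for y'
      using that t_unique y_unique by blast
  qed
qed

lemma double_ward_quasigroup_quasigroup: "double_ward_quasigroup m e \<Longrightarrow> quasigroup m"
  by (simp add: double_ward_quasigroup_def)

lemma double_ward_identity:
  "double_ward_quasigroup m e \<Longrightarrow> m (m (m e e) (m x z)) (m (m e y) z) = m x y"
  by (simp add: double_ward_quasigroup_def)

lemma double_ward_idem_unit:
  assumes "double_ward_quasigroup m e"
  shows "m e e = e"
proof -
  have q: "quasigroup m"
    using assms by (rule double_ward_quasigroup_quasigroup)
  obtain z where z: "m (m e e) z = e"
    using quasigroup_left_solvable[OF q] by blast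
  have "m (m (m e e) (m (m e e) z)) (m (m e e) z) = m (m e e) e"
    using assms by (rule double_ward_identity)
  then have "m (m (m e e) e) e = m (m e e) e"
    unfolding z .
  then have "m (m e e) e = m e e"
    by (rule quasigroup_right_cancel[OF q])
  then show ?thesis
    by (rule quasigroup_right_cancel[OF q])
qed

lemma double_ward_shifted_identity:
  assumes "double_ward_quasigroup m e"
  shows "m (m e (m (m e x) z)) (m (m e y) z) = m (m e x) y"
proof -
  have "m (m (m e e) (m (m e x) z)) (m (m e y) z) = m (m e x) y"
    using assms by (rule double_ward_identity)
  then show ?thesis
    unfolding double_ward_idem_unit[OF assms] .
qed

theorem proposition4p3:
  fixes star :: "'a \<Rightarrow> 'a \<Rightarrow> 'a" and e :: 'a
  assumes "double_ward_quasigroup star e"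
  shows "ward_quasigroup (\<lambda>x y. star (star e x) y)"
proof -
  have star: "quasigroup star"
    using assms by (rule double_ward_quasigroup_quasigroup)
  have "quasigroup (\<lambda>x y. star (star e x) y)"
    using star quasigroup_bij_left_translation[OF star] by (rule quasigroup_precompose_bij)
  then show ?thesis
    unfolding ward_quasigroup_def using double_ward_shifted_identity[OF assms] by simp
qed

end
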